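(* Let $p_t$, $t\in[0,1]$, be the marginals of the forward CTMC with rates $Q_t$ started from the data distribution $p_0$, and let $p^\theta_t$ be the marginals of the learned reverse process started at time $1$ from the reference distribution $p^\theta_1=p_r$. Then $$D_{KL}(p_0\,\|\,p_0^\theta)\le \int_0^1\mathbb{E}_{x_t\sim p_t}\sum_{y\neq x_t}Q_t(x_t,y)\,\ell\!\left(\frac{p_t(y)}{p_t(x_t)},\,s_\theta(x_t,t)_y\right)dt + D_{KL}(p_1\,\|\,p_r).$$
   Context: Finite state space $\mathcal{X}$; $(Q_t)_{t\in[0,1]}$ transition-rate matrices (nonnegative off-diagonal entries, columns summing to zero, $Q_t(x,y)$ for $x\ne y$ is the rate of jumping from $y$ to $x$). The forward process has marginals $p_t$ solving $\frac{d}{dt}p_t=Q_tp_t$ from the data distribution $p_0$. The true reverse process runs from $t=1$ to $t=0$, starts from $p_1$, and jumps from $x$ to $y\neq x$ at time $t$ with rate $Q_t(x,y)\,p_t(y)/p_t(x)$; its marginals are $p_t$. A model $s_\theta(x,t)_y>0$ ($x\ne y$) approximates the ratios $p_t(y)/p_t(x)$; the learned reverse process runs from $t=1$ to $t=0$, starts from a reference distribution $p_r$, and jumps from $x$ to $y\neq x$ at rate $Q_t(x,y)\,s_\theta(x,t)_y$; its marginals are denoted $p^\theta_t$ (so $p^\theta_1=p_r$, and $p^\theta_0$ is the learned data distribution). $K(a)=a(\log a-1)$ with $K(0)=0$, $\ell(a,b)=b-a\log b+K(a)$. All quantities are assumed regular enough for the integrals to be defined. *)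

theory Defs
  imports "HOL-Analysis.Analysis"
begin

definition Kfun :: "real \<Rightarrow> real" where
  "Kfun a = (if a = 0 then 0 else a * (ln a - 1))"

definition lfun :: "real \<Rightarrow> real \<Rightarrow> real" where
  "lfun a b = b - a * ln b + Kfun a"

definition KL :: "('x::finite \<Rightarrow> real) \<Rightarrow> ('x \<Rightarrow> real) \<Rightarrow> real" where
  "KL p q = (\<Sum>x\<in>UNIV. if p x = 0 then 0 else p x * ln (p x / q x))"

definition score_entropy_integrand ::
  "(real \<Rightarrow> 'x::finite \<Rightarrow> 'x \<Rightarrow> real) \<Rightarrow> (real \<Rightarrow> 'x \<Rightarrow> real)
     \<Rightarrow> ('x \<Rightarrow> real \<Rightarrow> 'x \<Rightarrow> real) \<Rightarrow> real \<Rightarrow> real" where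
  "score_entropy_integrand Q p s t =
     (\<Sum>x\<in>UNIV. p t x * (\<Sum>y\<in>UNIV - {x}. Q t x y * lfun (p t y / p t x) (s x t y)))"

end

theory Submission
  imports Defs
begin

(* The learned reverse marginals stay positive on [0,1]: p^theta_1 = p_r > 0, and going backwards
   in time p^theta can lose mass only at a bounded rate, so a Gronwall argument applies.
   Along the forward flow of p and the reverse flow of p^theta, the time derivative of
   KL(p_t || p^theta_t) plus the score-entropy integrand regroups, after using the zero column
   sums of Q_t, into a sum over edges x <> y of Q_t(x,y) p_t(y) (u - 1 - ln u) >= 0 with
   u = p^theta_t(x) s(x,t)_y / p^theta_t(y). Integrating over [0,1] gives the bound; at t = 0,
   where p_0 may vanish, only the continuity of a ln a at 0 is needed. *)

definition generator_apply :: "('x::finite \<Rightarrow> 'x \<Rightarrow> real) \<Rightarrow> ('x \<Rightarrow> real) \<Rightarrow> 'x \<Rightarrow> real" where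
  "generator_apply Q p x = (\<Sum>y\<in>UNIV. Q x y * p y)"

(* Reverse-time master equation of the learned chain: d/dt q_t = - reverse_generator_apply Q_t s_t q_t. *)
definition reverse_generator_apply ::
  "('x::finite \<Rightarrow> 'x \<Rightarrow> real) \<Rightarrow> ('x \<Rightarrow> 'x \<Rightarrow> real) \<Rightarrow> ('x \<Rightarrow> real) \<Rightarrow> 'x \<Rightarrow> real" where
  "reverse_generator_apply Q s q x =
     (\<Sum>y\<in>UNIV - {x}. q y * (Q y x * s y x)) - q x * (\<Sum>y\<in>UNIV - {x}. Q x y * s x y)"

definition offdiag_sum :: "('x::finite \<Rightarrow> 'x \<Rightarrow> real) \<Rightarrow> real" where
  "offdiag_sum E = (\<Sum>x\<in>UNIV. \<Sum>y\<in>UNIV - {x}. E x y)"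

lemma offdiag_sum_add: "offdiag_sum (\<lambda>x y. E x y + F x y) = offdiag_sum E + offdiag_sum F"
  by (simp add: offdiag_sum_def sum.distrib)

lemma offdiag_sum_diff: "offdiag_sum (\<lambda>x y. E x y - F x y) = offdiag_sum E - offdiag_sum F"
  by (simp add: offdiag_sum_def sum_subtractf)

lemma offdiag_sum_nonneg: "(\<And>x y. x \<noteq> y \<Longrightarrow> E x y \<ge> 0) \<Longrightarrow> offdiag_sum E \<ge> 0"
  unfolding offdiag_sum_def by (intro sum_nonneg) auto

lemma offdiag_sum_if: "offdiag_sum E = (\<Sum>x\<in>UNIV. \<Sum>y\<in>UNIV. if y = x then 0 else E x y)"
  unfolding offdiag_sum_def
  by (rule sum.cong[OF refl]) (simp add: sum.If_cases Compl_eq_Diff_UNIV)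

lemma offdiag_sum_swap: "offdiag_sum (\<lambda>x y. E y x) = offdiag_sum E"
  unfolding offdiag_sum_if by (subst sum.swap) (intro sum.cong refl, auto)

lemma sum_generator_apply_eq_0:
  assumes "\<And>y. (\<Sum>x\<in>UNIV. Q x y) = 0"
  shows "(\<Sum>x\<in>UNIV. generator_apply Q p x) = 0"
proof -
  have "(\<Sum>x\<in>UNIV. generator_apply Q p x) = (\<Sum>y\<in>UNIV. (\<Sum>x\<in>UNIV. Q x y) * p y)"
    unfolding generator_apply_def by (subst sum.swap) (simp add: sum_distrib_right)
  with assms show ?thesis by simp
qed

lemma sum_generator_apply_mult:
  assumes "\<And>y. (\<Sum>x\<in>UNIV. Q x y) = 0"
  shows "(\<Sum>x\<in>UNIV. generator_apply Q p x * L x) = offdiag_sum (\<lambda>x y. Q x y * p y * (L x - L y))"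
proof -
  have col: "(\<Sum>x\<in>UNIV. Q x y * p y * L y) = 0" for y
    using assms by (simp add: sum_distrib_right[symmetric])
  have "(\<Sum>x\<in>UNIV. generator_apply Q p x * L x) = (\<Sum>x\<in>UNIV. \<Sum>y\<in>UNIV. Q x y * p y * L x)"
    by (simp add: generator_apply_def sum_distrib_right)
  also have "\<dots> = (\<Sum>x\<in>UNIV. \<Sum>y\<in>UNIV. Q x y * p y * (L x - L y))"
    by (subst (1 2) sum.swap) (simp add: right_diff_distrib sum_subtractf col)
  also have "\<dots> = offdiag_sum (\<lambda>x y. Q x y * p y * (L x - L y))"
    unfolding offdiag_sum_if by (intro sum.cong refl) auto
  finally show ?thesis .
qed

lemma sum_reverse_generator_apply_div:
  assumes "\<And>x. q x \<noteq> 0"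
  shows "(\<Sum>x\<in>UNIV. p x * reverse_generator_apply Q s q x / q x)
    = offdiag_sum (\<lambda>x y. p y / q y * q x * Q x y * s x y) - offdiag_sum (\<lambda>x y. p x * Q x y * s x y)"
proof -
  have "p x * reverse_generator_apply Q s q x / q x
    = (\<Sum>y\<in>UNIV - {x}. p x / q x * q y * Q y x * s y x - p x * Q x y * s x y)" for x
  proof -
    have "p x * reverse_generator_apply Q s q x / q x
      = p x / q x * (\<Sum>y\<in>UNIV - {x}. q y * (Q y x * s y x)) - p x * (\<Sum>y\<in>UNIV - {x}. Q x y * s x y)"
      using assms[of x] by (simp add: reverse_generator_apply_def field_simps)
    then show ?thesis
      by (simp add: sum_distrib_left sum_subtractf mult.assoc)
  qed
  then have "(\<Sum>x\<in>UNIV. p x * reverse_generator_apply Q s q x / q x)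
    = offdiag_sum (\<lambda>x y. p x / q x * q y * Q y x * s y x) - offdiag_sum (\<lambda>x y. p x * Q x y * s x y)"
    by (simp add: offdiag_sum_def sum_subtractf)
  then show ?thesis
    using offdiag_sum_swap[of "\<lambda>x y. p y / q y * q x * Q x y * s x y"] by simp
qed

lemma lfun_pair_identity:
  assumes "px > 0" "py > 0" "qx > 0" "qy > 0" "\<sigma> > 0"
  shows "py * (ln (px / qx) - ln (py / qy)) + py / qy * qx * \<sigma> - px * \<sigma> + px * lfun (py / px) \<sigma>
    = py * (qx * \<sigma> / qy - 1 - ln (qx * \<sigma> / qy))"
  using assms by (simp add: lfun_def Kfun_def ln_div ln_mult field_simps)

lemma KL_dissipation_ge_neg_score_entropy:
  fixes Q :: "'x::finite \<Rightarrow> 'x \<Rightarrow> real" and p q :: "'x \<Rightarrow> real" and s :: "'x \<Rightarrow> 'x \<Rightarrow> real"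
  assumes Q_offdiag: "\<And>x y. x \<noteq> y \<Longrightarrow> Q x y \<ge> 0"
    and Q_cols: "\<And>y. (\<Sum>x\<in>UNIV. Q x y) = 0"
    and p_pos: "\<And>x. p x > 0" and q_pos: "\<And>x. q x > 0"
    and s_pos: "\<And>x y. x \<noteq> y \<Longrightarrow> s x y > 0"
  shows "- (\<Sum>x\<in>UNIV. p x * (\<Sum>y\<in>UNIV - {x}. Q x y * lfun (p y / p x) (s x y)))
    \<le> (\<Sum>x\<in>UNIV. generator_apply Q p x * ln (p x / q x) + generator_apply Q p x
                   + p x * reverse_generator_apply Q s q x / q x)"
proof -
  define L where "L x = ln (p x / q x)" for x
  have "(\<Sum>x\<in>UNIV. generator_apply Q p x * L x + generator_apply Q p x
                   + p x * reverse_generator_apply Q s q x / q x)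
      + (\<Sum>x\<in>UNIV. p x * (\<Sum>y\<in>UNIV - {x}. Q x y * lfun (p y / p x) (s x y)))
    = offdiag_sum (\<lambda>x y. Q x y * p y * (L x - L y)) + 0
      + (offdiag_sum (\<lambda>x y. p y / q y * q x * Q x y * s x y) - offdiag_sum (\<lambda>x y. p x * Q x y * s x y))
      + offdiag_sum (\<lambda>x y. p x * (Q x y * lfun (p y / p x) (s x y)))"
    using q_pos
    by (simp add: sum.distrib sum_generator_apply_eq_0 sum_generator_apply_mult sum_reverse_generator_apply_div
        Q_cols less_imp_neq[symmetric] offdiag_sum_def sum_distrib_left)
  also have "\<dots> = offdiag_sum (\<lambda>x y. Q x y * (p y * (L x - L y) + p y / q y * q x * s x y
                                   - p x * s x y + p x * lfun (p y / p x) (s x y)))"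
    by (simp add: offdiag_sum_add[symmetric] offdiag_sum_diff[symmetric] algebra_simps)
  also have "\<dots> \<ge> 0"
  proof (rule offdiag_sum_nonneg)
    fix x y :: 'x
    assume "x \<noteq> y"
    define u where "u = q x * s x y / q y"
    have "u > 0"
      using q_pos s_pos[OF \<open>x \<noteq> y\<close>] by (simp add: u_def)
    then have "0 \<le> Q x y * (p y * (u - 1 - ln u))"
      using Q_offdiag[OF \<open>x \<noteq> y\<close>] p_pos[of y] ln_le_minus_one[of u]
      by (intro mult_nonneg_nonneg) auto
    also have "p y * (u - 1 - ln u) = p y * (L x - L y) + p y / q y * q x * s x y
                                   - p x * s x y + p x * lfun (p y / p x) (s x y)"
      unfolding u_def L_def
      by (rule lfun_pair_identity[symmetric]) (use p_pos q_pos s_pos[OF \<open>x \<noteq> y\<close>] in auto)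
    finally show "0 \<le> Q x y * (p y * (L x - L y) + p y / q y * q x * s x y
                                   - p x * s x y + p x * lfun (p y / p x) (s x y))" .
  qed
  finally show ?thesis unfolding L_def by linarith
qed

lemma pos_of_deriv_le_mult:
  fixes f :: "real \<Rightarrow> real"
  assumes "a \<le> b"
    and f_cont: "continuous_on {a..b} f"
    and fb_pos: "f b > 0"
    and f_deriv: "\<And>u. a < u \<Longrightarrow> u < b \<Longrightarrow> \<exists>D. (f has_real_derivative D) (at u) \<and> D \<le> M * f u"
  shows "f a > 0"
proof -
  define g where "g u = f u * exp (- M * u)" for u
  have "g b \<le> g a"
  proof (rule DERIV_nonpos_imp_decreasing_open[OF \<open>a \<le> b\<close>])
    fix u
    assume "a < u" "u < b"
    then obtain D where D: "(f has_real_derivative D) (at u)" "D \<le> M * f u"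
      using f_deriv by blast
    have "(g has_real_derivative (D - M * f u) * exp (- M * u)) (at u)"
      unfolding g_def by (auto intro!: derivative_eq_intros D(1) simp: algebra_simps)
    moreover have "(D - M * f u) * exp (- M * u) \<le> 0"
      using D(2) by (simp add: mult_nonpos_nonneg)
    ultimately show "\<exists>y. (g has_real_derivative y) (at u) \<and> y \<le> 0"
      by blast
  next
    show "continuous_on {a..b} g"
      unfolding g_def by (intro continuous_intros f_cont)
  qed
  moreover have "g b > 0"
    using fb_pos by (simp add: g_def)
  ultimately have "g a > 0"
    by linarith
  then show ?thesis
    by (simp add: g_def zero_less_mult_iff)
qed

lemma finite_family_bounded_above:
  fixes f :: "'x::finite \<Rightarrow> real \<Rightarrow> real"
  assumes "\<And>x. continuous_on {a..b} (f x)"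
  obtains M where "\<And>x t. t \<in> {a..b} \<Longrightarrow> f x t \<le> M"
proof -
  have "bounded ((\<lambda>t. \<Sum>x\<in>UNIV. \<bar>f x t\<bar>) ` {a..b})"
    by (intro compact_imp_bounded compact_continuous_image continuous_intros assms compact_Icc)
  then obtain B where B: "\<And>t. t \<in> {a..b} \<Longrightarrow> (\<Sum>x\<in>UNIV. \<bar>f x t\<bar>) \<le> B"
    by (fastforce simp: bounded_real)
  show ?thesis
  proof (rule that)
    fix x t
    assume "t \<in> {a..b}"
    have "f x t \<le> (\<Sum>x\<in>UNIV. \<bar>f x t\<bar>)"
      using member_le_sum[of x UNIV "\<lambda>x. \<bar>f x t\<bar>"] by simp
    then show "f x t \<le> B"
      using B[OF \<open>t \<in> {a..b}\<close>] by linarith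
  qed
qed

lemma last_nonpos_time:
  fixes q :: "real \<Rightarrow> 'x::finite \<Rightarrow> real"
  assumes q_cont: "\<And>x. continuous_on {a..b} (\<lambda>t. q t x)"
    and "t \<in> {a..b}" "q t x \<le> 0"
  obtains T y where "T \<in> {a..b}" "q T y \<le> 0" "\<And>u y. T < u \<Longrightarrow> u \<le> b \<Longrightarrow> q u y > 0"
proof -
  define S where "S = (\<Union>y. {u \<in> {a..b}. q u y \<le> 0})"
  have "t \<in> S"
    using assms by (auto simp: S_def)
  moreover have "closed S"
    unfolding S_def
    by (intro closed_UN ballI continuous_on_closed_Collect_le q_cont continuous_on_const) auto
  moreover have bdd: "bdd_above S"
    unfolding S_def by (rule bdd_aboveI[of _ b]) auto
  ultimately have "Sup S \<in> S"
    using closed_contains_Sup by blast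
  moreover have "q u y > 0" if "Sup S < u" "u \<le> b" for u y
  proof (rule ccontr)
    assume "\<not> q u y > 0"
    then have "u \<in> S"
      using that \<open>Sup S \<in> S\<close> by (auto simp: S_def not_less)
    then show False
      using cSup_upper[OF _ bdd] that by force
  qed
  ultimately show ?thesis
    using that by (auto simp: S_def)
qed

lemma master_equation_backward_pos:
  fixes q :: "real \<Rightarrow> 'x::finite \<Rightarrow> real" and R :: "real \<Rightarrow> 'x \<Rightarrow> 'x \<Rightarrow> real"
    and out :: "'x \<Rightarrow> real \<Rightarrow> real"
  assumes "t \<in> {a..b}"
    and q_ode: "\<And>t x. t \<in> {a..b} \<Longrightarrow>
      ((\<lambda>\<tau>. q \<tau> x) has_real_derivative - ((\<Sum>y\<in>UNIV - {x}. q t y * R t y x) - q t x * out x t))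
        (at t within {a..b})"
    and qb_pos: "\<And>x. q b x > 0"
    and R_nonneg: "\<And>t x y. t \<in> {a..b} \<Longrightarrow> x \<noteq> y \<Longrightarrow> R t x y \<ge> 0"
    and out_cont: "\<And>x. continuous_on {a..b} (out x)"
  shows "q t x > 0"
proof (rule ccontr)
  obtain M where M: "\<And>x t. t \<in> {a..b} \<Longrightarrow> out x t \<le> M"
    using finite_family_bounded_above[where f = out, OF out_cont] by blast
  have q_cont: "continuous_on {a..b} (\<lambda>t. q t x)" for x
    using q_ode by (rule DERIV_continuous_on)
  assume "\<not> q t x > 0"
  then obtain T y where T: "T \<in> {a..b}" "q T y \<le> 0"
    and later_pos: "\<And>u y. T < u \<Longrightarrow> u \<le> b \<Longrightarrow> q u y > 0"
    using last_nonpos_time[OF q_cont \<open>t \<in> {a..b}\<close>] by (meson not_less)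
  have "q T y > 0"
  proof (rule pos_of_deriv_le_mult[where f = "\<lambda>u. q u y" and M = M])
    show "T \<le> b" "q b y > 0"
      using T qb_pos by auto
    show "continuous_on {T..b} (\<lambda>u. q u y)"
      using T by (auto intro: continuous_on_subset[OF q_cont])
    fix u
    assume u: "T < u" "u < b"
    then have "u \<in> {a..b}"
      using T by auto
    define D where "D = - ((\<Sum>z\<in>UNIV - {y}. q u z * R u z y) - q u y * out y u)"
    have "((\<lambda>u. q u y) has_real_derivative D) (at u)"
      using q_ode[OF \<open>u \<in> {a..b}\<close>, of y] u T by (simp add: D_def at_within_Icc_at)
    moreover have "(\<Sum>z\<in>UNIV - {y}. q u z * R u z y) \<ge> 0"
      using u later_pos R_nonneg[OF \<open>u \<in> {a..b}\<close>]
      by (intro sum_nonneg mult_nonneg_nonneg) (auto intro: less_imp_le)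
    moreover have "q u y * out y u \<le> M * q u y"
      using M[OF \<open>u \<in> {a..b}\<close>, of y] later_pos[of u y] u by (simp add: mult.commute)
    ultimately show "\<exists>D. ((\<lambda>u. q u y) has_real_derivative D) (at u) \<and> D \<le> M * q u y"
      unfolding D_def by force
  qed
  with T show False
    by simp
qed

lemma tendsto_x_ln_x_at_right_0: "((\<lambda>u::real. u * ln u) \<longlongrightarrow> 0) (at_right 0)"
proof -
  have "((\<lambda>x::real. - (ln x / x)) \<longlongrightarrow> 0) at_top"
    using tendsto_minus[OF ln_x_over_x_tendsto_0] by simp
  moreover have "eventually (\<lambda>x::real. - (ln x / x) = inverse x * ln (inverse x)) at_top"
    by (simp add: ln_inverse divide_inverse)
  ultimately have "((\<lambda>x::real. inverse x * ln (inverse x)) \<longlongrightarrow> 0) at_top"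
    by (rule Lim_transform_eventually)
  then show ?thesis
    by (simp add: filterlim_at_right_to_top)
qed

lemma continuous_on_x_ln_x: "continuous_on {0..} (\<lambda>u::real. u * ln u)"
  unfolding continuous_on_eq_continuous_within
proof
  fix u :: real
  assume "u \<in> {0..}"
  show "continuous (at u within {0..}) (\<lambda>u. u * ln u)"
  proof (cases "u = 0")
    case True
    then show ?thesis
      using tendsto_x_ln_x_at_right_0 by (simp add: continuous_within at_within_Ici_at_right)
  next
    case False
    with \<open>u \<in> {0..}\<close> have "isCont (\<lambda>u. u * ln u) u"
      by (auto intro!: continuous_intros)
    then show ?thesis
      by (rule continuous_at_imp_continuous_at_within)
  qed
qed

lemma KL_altdef: "KL p q = (\<Sum>x\<in>UNIV. p x * ln (p x / q x))"
  unfolding KL_def by (intro sum.cong) auto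

lemma continuous_on_KL:
  fixes p q :: "real \<Rightarrow> 'x::finite \<Rightarrow> real"
  assumes p_cont: "\<And>x. continuous_on S (\<lambda>t. p t x)"
    and q_cont: "\<And>x. continuous_on S (\<lambda>t. q t x)"
    and p_nonneg: "\<And>t x. t \<in> S \<Longrightarrow> p t x \<ge> 0"
    and q_pos: "\<And>t x. t \<in> S \<Longrightarrow> q t x > 0"
  shows "continuous_on S (\<lambda>t. KL (p t) (q t))"
proof -
  have "p t x * ln (p t x / q t x) = p t x * ln (p t x) - p t x * ln (q t x)" if "t \<in> S" for t x
    using p_nonneg[OF that, of x] q_pos[OF that, of x]
    by (cases "p t x = 0") (simp_all add: ln_div right_diff_distrib)
  then have KL_eq: "(\<Sum>x\<in>UNIV. p t x * ln (p t x) - p t x * ln (q t x)) = KL (p t) (q t)"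
    if "t \<in> S" for t
    unfolding KL_altdef using that by simp
  have p_ln_p: "continuous_on S (\<lambda>t. p t x * ln (p t x))" for x
    by (rule continuous_on_compose2[OF continuous_on_x_ln_x p_cont]) (auto intro: p_nonneg)
  have ln_q: "continuous_on S (\<lambda>t. ln (q t x))" for x
    using q_pos by (intro continuous_on_ln q_cont) (auto simp: less_imp_neq[symmetric])
  have "continuous_on S (\<lambda>t. \<Sum>x\<in>UNIV. p t x * ln (p t x) - p t x * ln (q t x))"
    by (intro p_ln_p ln_q p_cont continuous_on_sum continuous_on_diff continuous_on_mult)
  then show ?thesis
    by (rule continuous_on_eq) (rule KL_eq)
qed

lemma has_real_derivative_KL:
  fixes p q :: "real \<Rightarrow> 'x::finite \<Rightarrow> real"
  assumes p_deriv: "\<And>x. ((\<lambda>t. p t x) has_real_derivative dp x) (at t)"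
    and q_deriv: "\<And>x. ((\<lambda>t. q t x) has_real_derivative dq x) (at t)"
    and p_pos: "\<And>x. p t x > 0" and q_pos: "\<And>x. q t x > 0"
  shows "((\<lambda>t. KL (p t) (q t)) has_real_derivative
           (\<Sum>x\<in>UNIV. dp x * ln (p t x / q t x) + dp x - p t x * dq x / q t x)) (at t)"
  unfolding KL_altdef
proof (rule DERIV_sum)
  fix x
  show "((\<lambda>t. p t x * ln (p t x / q t x)) has_real_derivative
          dp x * ln (p t x / q t x) + dp x - p t x * dq x / q t x) (at t)"
    using p_pos[of x] q_pos[of x]
    by (auto intro!: derivative_eq_intros p_deriv q_deriv simp: field_simps power2_eq_square)
qed

lemma continuous_on_score_entropy_integrand:
  assumes Q_cont: "\<And>x y. continuous_on S (\<lambda>t. Q t x y)"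
    and p_cont: "\<And>x. continuous_on S (\<lambda>t. p t x)"
    and s_cont: "\<And>x y. continuous_on S (\<lambda>t. s x t y)"
    and p_pos: "\<And>t x. t \<in> S \<Longrightarrow> p t x > 0"
    and s_pos: "\<And>x t y. t \<in> S \<Longrightarrow> x \<noteq> y \<Longrightarrow> s x t y > 0"
  shows "continuous_on S (score_entropy_integrand Q p s)"
proof -
  have lfun_eq: "lfun a b = b - a * ln b + a * (ln a - 1)" for a b
    by (simp add: lfun_def Kfun_def)
  show ?thesis
    unfolding score_entropy_integrand_def lfun_eq using p_pos s_pos
    by (intro continuous_intros Q_cont p_cont s_cont) (auto simp: less_imp_neq[symmetric])
qed

lemma decrease_le_integral:
  fixes F I :: "real \<Rightarrow> real"
  assumes "a \<le> b"
    and F_cont: "continuous_on {a..b} F"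
    and I_int: "I integrable_on {a..b}"
    and I_cont: "\<And>c. a < c \<Longrightarrow> continuous_on {c..b} I"
    and F_deriv: "\<And>t. a < t \<Longrightarrow> t < b \<Longrightarrow> \<exists>D. (F has_real_derivative D) (at t) \<and> - I t \<le> D"
  shows "F a \<le> F b + integral {a..b} I"
proof -
  define H where "H t = F t - integral {t..b} I" for t
  have "H a \<le> H b"
  proof (rule DERIV_nonneg_imp_increasing_open[OF \<open>a \<le> b\<close>])
    fix t
    assume t: "a < t" "t < b"
    then obtain D where D: "(F has_real_derivative D) (at t)" "- I t \<le> D"
      using F_deriv by blast
    have "((\<lambda>t. integral {t..b} I) has_real_derivative - I t) (at t within {(a + t) / 2..b})"
      using t by (intro integral_has_real_derivative' I_cont) auto
    then have "((\<lambda>t. integral {t..b} I) has_real_derivative - I t) (at t)"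
      using t by (simp add: at_within_Icc_at)
    then have "(H has_real_derivative D - - I t) (at t)"
      unfolding H_def by (intro DERIV_diff D(1))
    then show "\<exists>y. (H has_real_derivative y) (at t) \<and> 0 \<le> y"
      using D(2) by force
  next
    show "continuous_on {a..b} H"
      unfolding H_def by (intro continuous_on_diff F_cont indefinite_integral_continuous_1' I_int)
  qed
  then show ?thesis
    by (simp add: H_def)
qed

lemma KL_marginals_deriv_ge_neg_score_entropy:
  fixes Q :: "real \<Rightarrow> 'x::finite \<Rightarrow> 'x \<Rightarrow> real" and p q :: "real \<Rightarrow> 'x \<Rightarrow> real"
    and s :: "'x \<Rightarrow> real \<Rightarrow> 'x \<Rightarrow> real"
  assumes "\<And>x y. x \<noteq> y \<Longrightarrow> Q t x y \<ge> 0" "\<And>y. (\<Sum>x\<in>UNIV. Q t x y) = 0"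
    and "\<And>x. p t x > 0" "\<And>x. q t x > 0" "\<And>x y. x \<noteq> y \<Longrightarrow> s x t y > 0"
    and p_deriv: "\<And>x. ((\<lambda>\<tau>. p \<tau> x) has_real_derivative generator_apply (Q t) (p t) x) (at t)"
    and q_deriv: "\<And>x. ((\<lambda>\<tau>. q \<tau> x) has_real_derivative
                          - reverse_generator_apply (Q t) (\<lambda>x y. s x t y) (q t) x) (at t)"
  shows "\<exists>D. ((\<lambda>t. KL (p t) (q t)) has_real_derivative D) (at t)
             \<and> - score_entropy_integrand Q p s t \<le> D"
proof (intro exI conjI)
  show "((\<lambda>t. KL (p t) (q t)) has_real_derivative
          (\<Sum>x\<in>UNIV. generator_apply (Q t) (p t) x * ln (p t x / q t x) + generator_apply (Q t) (p t) x
             - p t x * - reverse_generator_apply (Q t) (\<lambda>x y. s x t y) (q t) x / q t x)) (at t)"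
    using assms by (intro has_real_derivative_KL p_deriv q_deriv)
  show "- score_entropy_integrand Q p s t
    \<le> (\<Sum>x\<in>UNIV. generator_apply (Q t) (p t) x * ln (p t x / q t x) + generator_apply (Q t) (p t) x
         - p t x * - reverse_generator_apply (Q t) (\<lambda>x y. s x t y) (q t) x / q t x)"
    using KL_dissipation_ge_neg_score_entropy[of "Q t" "p t" "q t" "\<lambda>x y. s x t y"] assms
    by (simp add: score_entropy_integrand_def)
qed

theorem theorem1:
  fixes Q :: "real \<Rightarrow> 'x::finite \<Rightarrow> 'x \<Rightarrow> real"
    and p :: "real \<Rightarrow> 'x \<Rightarrow> real"
    and p\<theta> :: "real \<Rightarrow> 'x \<Rightarrow> real"
    and s :: "'x \<Rightarrow> real \<Rightarrow> 'x \<Rightarrow> real"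
    and pr :: "'x \<Rightarrow> real"
  assumes Q_offdiag: "\<And>t x y. t \<in> {0..1} \<Longrightarrow> x \<noteq> y \<Longrightarrow> Q t x y \<ge> 0"
    and Q_cols: "\<And>t y. t \<in> {0..1} \<Longrightarrow> (\<Sum>x\<in>UNIV. Q t x y) = 0"
    and Q_cont: "\<And>x y. continuous_on {0..1} (\<lambda>t. Q t x y)"
    and p0_nonneg: "\<And>x. p 0 x \<ge> 0"
    and p0_sum: "(\<Sum>x\<in>UNIV. p 0 x) = 1"
    and p_ode: "\<And>t x. t \<in> {0..1} \<Longrightarrow>
        ((\<lambda>\<tau>. p \<tau> x) has_real_derivative (\<Sum>y\<in>UNIV. Q t x y * p t y)) (at t within {0..1})"
    and p_pos: "\<And>t x. t \<in> {0<..1} \<Longrightarrow> p t x > 0"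
    and s_pos: "\<And>x t y. t \<in> {0..1} \<Longrightarrow> x \<noteq> y \<Longrightarrow> s x t y > 0"
    and s_cont: "\<And>x y. continuous_on {0..1} (\<lambda>t. s x t y)"
    and pr_pos: "\<And>x. pr x > 0"
    and pr_sum: "(\<Sum>x\<in>UNIV. pr x) = 1"
    and p\<theta>_init: "p\<theta> 1 = pr"
    and p\<theta>_ode: "\<And>t x. t \<in> {0..1} \<Longrightarrow>
        ((\<lambda>\<tau>. p\<theta> \<tau> x) has_real_derivative
           - ((\<Sum>y\<in>UNIV - {x}. p\<theta> t y * (Q t y x * s y t x))
              - p\<theta> t x * (\<Sum>y\<in>UNIV - {x}. Q t x y * s x t y)))
         (at t within {0..1})"
    and integrable: "score_entropy_integrand Q p s integrable_on {0..1}"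
  shows "KL (p 0) (p\<theta> 0) \<le> integral {0..1} (score_entropy_integrand Q p s) + KL (p 1) pr"
proof -
  have p\<theta>_pos: "p\<theta> t x > 0" if "t \<in> {0..1}" for t x
    using that p\<theta>_ode
    by (rule master_equation_backward_pos[where R = "\<lambda>t y x. Q t y x * s y t x"
          and out = "\<lambda>x t. \<Sum>y\<in>UNIV - {x}. Q t x y * s x t y"])
      (auto simp: p\<theta>_init pr_pos intro!: mult_nonneg_nonneg Q_offdiag less_imp_le[OF s_pos]
        continuous_intros Q_cont s_cont)
  have p_nonneg: "p t x \<ge> 0" if "t \<in> {0..1}" for t x
    using that p0_nonneg p_pos[of t x] by (cases "t = 0") auto
  have p_cont: "continuous_on {0..1} (\<lambda>t. p t x)" for x
    using p_ode by (rule DERIV_continuous_on)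
  have p\<theta>_cont: "continuous_on {0..1} (\<lambda>t. p\<theta> t x)" for x
    using p\<theta>_ode by (rule DERIV_continuous_on)
  have "KL (p 0) (p\<theta> 0) \<le> KL (p 1) (p\<theta> 1) + integral {0..1} (score_entropy_integrand Q p s)"
  proof (rule decrease_le_integral[OF _ _ integrable])
    show "continuous_on {0..1} (\<lambda>t. KL (p t) (p\<theta> t))"
      using p_nonneg p\<theta>_pos by (intro continuous_on_KL p_cont p\<theta>_cont)
    show "continuous_on {c..1} (score_entropy_integrand Q p s)" if "0 < c" for c
      using that p_pos s_pos
      by (intro continuous_on_score_entropy_integrand continuous_on_subset[OF Q_cont]
          continuous_on_subset[OF p_cont] continuous_on_subset[OF s_cont]) auto
    fix t :: real
    assume "0 < t" "t < 1"
    then have t: "t \<in> {0..1}" "t \<in> {0<..1}" "at t within {0..1} = at t"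
      by (auto simp: at_within_Icc_at)
    show "\<exists>D. ((\<lambda>t. KL (p t) (p\<theta> t)) has_real_derivative D) (at t)
              \<and> - score_entropy_integrand Q p s t \<le> D"
      using p_ode[OF t(1)] p\<theta>_ode[OF t(1)] p_pos[OF t(2)] p\<theta>_pos[OF t(1)] Q_offdiag[OF t(1)]
        Q_cols[OF t(1)] s_pos[OF t(1)]
      by (intro KL_marginals_deriv_ge_neg_score_entropy)
        (auto simp: t(3) generator_apply_def reverse_generator_apply_def)
  qed simp
  then show ?thesis
    using p\<theta>_init by simp
qed

end
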